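(* There are uncountably many paving tropical ideals of degree $3$ in $\mathbb{B}[x^{\pm1}]$ (in particular, uncountably many zero-dimensional tropical ideals of degree $3$ in $\mathbb{B}[x^{\pm1}]$).
   Context: $\mathbb{B}=\{\infty,0\}$ with $\oplus=\min$ and multiplication $+$; $\operatorname{supp}(f)$ is the set of exponents with coefficient $\neq\infty$. A tropical ideal $I\subset\mathbb{B}[x^{\pm1}]$ is an ideal such that for all $f,g\in I$ and $u\in\operatorname{supp}(f)\cap\operatorname{supp}(g)$ there is $h\in I$ with $\operatorname{supp}(f)\Delta\operatorname{supp}(g)\subset\operatorname{supp}(h)\subset(\operatorname{supp}(f)\cup\operatorname{supp}(g))\setminus\{u\}$. Its underlying matroid on $\mathbb{Z}$ has as independent sets those containing no support of a polynomial of $I$. $I$ is zero-dimensional of degree $r$ iff this matroid has finite rank $r$. $I$ is a paving tropical ideal if it is zero-dimensional and every minimal support of a polynomial in $I$ (circuit) has size $\deg(I)$ or $\deg(I)+1$. *)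

theory Defs
  imports Main "HOL-Library.Countable_Set"
begin

text \<open>A Laurent polynomial over the Boolean semifield B = {inf, 0} (min, +) is determined
by its support, a finite subset of the integers: coefficient 0 on the support, inf elsewhere.
Tropical addition (min) corresponds to union of supports, the zero polynomial (all inf)
to the empty set, and tropical multiplication (+) to the Minkowski sum of supports.\<close>

definition bmult :: "int set \<Rightarrow> int set \<Rightarrow> int set" where
  "bmult f g = {i + j | i j. i \<in> f \<and> j \<in> g}"

definition b_ideal :: "int set set \<Rightarrow> bool" where
  "b_ideal I \<longleftrightarrow> (\<forall>f\<in>I. finite f) \<and> {} \<in> I \<and>
     (\<forall>f\<in>I. \<forall>g\<in>I. f \<union> g \<in> I) \<and>
     (\<forall>f\<in>I. \<forall>g. finite g \<longrightarrow> bmult g f \<in> I)"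

definition tropical_ideal :: "int set set \<Rightarrow> bool" where
  "tropical_ideal I \<longleftrightarrow> b_ideal I \<and>
     (\<forall>f\<in>I. \<forall>g\<in>I. \<forall>u\<in>f \<inter> g. \<exists>h\<in>I.
        (f - g) \<union> (g - f) \<subseteq> h \<and> h \<subseteq> (f \<union> g) - {u})"

definition matroid_indep :: "int set set \<Rightarrow> int set \<Rightarrow> bool" where
  "matroid_indep I A \<longleftrightarrow> (\<forall>f\<in>I. f \<noteq> {} \<longrightarrow> \<not> f \<subseteq> A)"

definition zero_dim_degree :: "int set set \<Rightarrow> nat \<Rightarrow> bool" where
  "zero_dim_degree I r \<longleftrightarrow> tropical_ideal I \<and>
     (\<forall>A. matroid_indep I A \<longrightarrow> finite A \<and> card A \<le> r) \<and>
     (\<exists>A. finite A \<and> matroid_indep I A \<and> card A = r)"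

definition circuit :: "int set set \<Rightarrow> int set \<Rightarrow> bool" where
  "circuit I C \<longleftrightarrow> C \<in> I \<and> C \<noteq> {} \<and> (\<forall>f\<in>I. f \<noteq> {} \<longrightarrow> f \<subseteq> C \<longrightarrow> f = C)"

definition paving_tropical_ideal :: "int set set \<Rightarrow> bool" where
  "paving_tropical_ideal I \<longleftrightarrow> (\<exists>r. zero_dim_degree I r \<and>
     (\<forall>C. circuit I C \<longrightarrow> card C = r \<or> card C = r + 1))"

end

theory Submission
  imports Defs
begin

text \<open>Call a translation-invariant family of 3-subsets of \<open>\<int>\<close>, any two of which meet in at
most one point, a family of lines. The sets \<open>{}\<close>, the lines, the 4-sets containing no line and all
finite sets of size at least 5 then form a paving tropical ideal of degree 3 whose 3-element
circuits are the lines: translation invariance gives closure under multiplication, and because two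
lines share at most one point, every circuit elimination is resolved by a line or by a large set.
The translates of the rulers \<open>4\<^sup>n \<cdot> {0,1,3}\<close> with \<open>n \<in> A\<close> form a family of lines, since the
nonzero differences \<open>\<plusminus>1, \<plusminus>2, \<plusminus>3\<close> of \<open>{0,1,3}\<close> are not related by a power of 4. As
\<open>4\<^sup>n \<cdot> {0,1,3}\<close> is a support exactly when \<open>n \<in> A\<close>, distinct \<open>A \<subseteq> \<nat>\<close> give distinct ideals.\<close>

lemma obtain_card4_subset:
  assumes "\<not> (finite B \<and> card B \<le> 3)"
  obtains D where "D \<subseteq> B" "finite D" "card D = 4"
proof (cases "finite B")
  case True
  with assms have "4 \<le> card B" by simp
  then show ?thesis by (rule obtain_subset_with_card_n) (use that in blast)
next
  case False
  then show ?thesis using infinite_arbitrarily_large that by blast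
qed

locale line_family =
  fixes lines :: "int set set"
  assumes card_line: "L \<in> lines \<Longrightarrow> card L = 3"
    and lines_eqI: "\<lbrakk>L \<in> lines; M \<in> lines; x \<in> L \<inter> M; y \<in> L \<inter> M; x \<noteq> y\<rbrakk> \<Longrightarrow> L = M"
    and translate_line: "L \<in> lines \<Longrightarrow> (+) c ` L \<in> lines"
begin

definition paving_ideal :: "int set set" where
  "paving_ideal = {S. finite S \<and> (S = {} \<or> S \<in> lines \<or>
      (card S = 4 \<and> (\<forall>L\<in>lines. \<not> L \<subseteq> S)) \<or> 5 \<le> card S)}"

lemma finite_line: "L \<in> lines \<Longrightarrow> finite L"
  using card_line card.infinite by fastforce

lemma line_in_paving_ideal: "L \<in> lines \<Longrightarrow> L \<in> paving_ideal"
  unfolding paving_ideal_def using finite_line by blast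

lemma empty_in_paving_ideal: "{} \<in> paving_ideal"
  unfolding paving_ideal_def by simp

lemma paving_idealE:
  assumes "S \<in> paving_ideal" "S \<noteq> {}"
  obtains "finite S" "S \<in> lines"
    | "finite S" "card S = 4" "\<forall>L\<in>lines. \<not> L \<subseteq> S"
    | "finite S" "5 \<le> card S"
  using assms unfolding paving_ideal_def by blast

lemma finite_paving_ideal: "S \<in> paving_ideal \<Longrightarrow> finite S"
  unfolding paving_ideal_def by blast

lemma card_paving_ideal_ge: "S \<in> paving_ideal \<Longrightarrow> S \<noteq> {} \<Longrightarrow> 3 \<le> card S"
  by (elim paving_idealE) (auto simp: card_line)

lemma card3_in_paving_ideal_iff: "card S = 3 \<Longrightarrow> S \<in> paving_ideal \<longleftrightarrow> S \<in> lines"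
  using card_paving_ideal_ge line_in_paving_ideal
  by (fastforce elim: paving_idealE)

text \<open>The sets \<open>L \<union> {v}\<close> must not be supports: eliminating a point \<open>u \<in> L\<close> between \<open>L\<close> and
\<open>L \<union> {v}\<close> would produce the line \<open>(L - {u}) \<union> {v}\<close>, which meets \<open>L\<close> in two points.\<close>

lemma not_in_paving_ideal_line_insert:
  assumes S: "S \<in> paving_ideal" and L: "L \<in> lines"
    and "v \<notin> L" "v \<in> S" "S \<subseteq> insert v L"
  shows False
proof -
  have card_insert: "card (insert v L) = 4"
    using \<open>v \<notin> L\<close> card_line[OF L] finite_line[OF L] by simp
  then have "card S \<le> 4"
    using card_mono[OF _ \<open>S \<subseteq> insert v L\<close>] finite_line[OF L] by simp
  from S \<open>v \<in> S\<close> have "S \<noteq> {}" by blast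
  with S show False
  proof (cases rule: paving_idealE)
    case 2
    then have "S = insert v L"
      using card_subset_eq[OF _ \<open>S \<subseteq> insert v L\<close>] finite_line[OF L] card_insert by simp
    with 2 L show False by blast
  next
    case 1
    have "card (S - {v}) = 2"
      using card_line[OF \<open>S \<in> lines\<close>] \<open>v \<in> S\<close> \<open>finite S\<close> by simp
    then obtain x y where "S - {v} = {x, y}" "x \<noteq> y"
      by (meson card_2_iff)
    then have "S = L"
      using lines_eqI[OF \<open>S \<in> lines\<close> L, of x y] \<open>S \<subseteq> insert v L\<close> by blast
    with \<open>v \<in> S\<close> \<open>v \<notin> L\<close> show False by blast
  qed (use \<open>card S \<le> 4\<close> in simp)
qed

lemma card_Un_paving_ideal_ge:
  assumes f: "f \<in> paving_ideal" and g: "g \<in> paving_ideal" and "f \<noteq> {}" "\<not> g \<subseteq> f"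
  shows "5 \<le> card (f \<union> g)"
proof -
  obtain x where x: "x \<in> g" "x \<notin> f" using \<open>\<not> g \<subseteq> f\<close> by blast
  have fin: "finite (f \<union> g)"
    using finite_paving_ideal[OF f] finite_paving_ideal[OF g] by simp
  have "card (insert x f) \<le> card (f \<union> g)"
    using x fin by (intro card_mono) auto
  then have card_Un: "card f + 1 \<le> card (f \<union> g)"
    using x finite_paving_ideal[OF f] by simp
  from f \<open>f \<noteq> {}\<close> show ?thesis
  proof (cases rule: paving_idealE)
    case 1
    show ?thesis
    proof (rule ccontr)
      assume "\<not> ?thesis"
      then have "card (f \<union> g) = card (insert x f)"
        using card_Un card_line[OF \<open>f \<in> lines\<close>] x \<open>finite f\<close> by simp
      then have "f \<union> g = insert x f"
        using card_subset_eq[of "f \<union> g" "insert x f"] fin x by auto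
      then show False
        using not_in_paving_ideal_line_insert[OF g \<open>f \<in> lines\<close> x(2,1)] by blast
    qed
  qed (use card_Un in auto)
qed

lemma paving_ideal_Un:
  assumes f: "f \<in> paving_ideal" and g: "g \<in> paving_ideal"
  shows "f \<union> g \<in> paving_ideal"
proof (cases "f = {} \<or> g \<subseteq> f")
  case True
  with g f show ?thesis by (auto simp: sup_absorb1)
next
  case False
  then have "5 \<le> card (f \<union> g)"
    using card_Un_paving_ideal_ge[OF f g] by blast
  with f g show ?thesis
    unfolding paving_ideal_def by auto
qed

lemma translate_paving_ideal:
  assumes "S \<in> paving_ideal"
  shows "(+) c ` S \<in> paving_ideal"
proof -
  have card_eq: "card ((+) c ` S) = card S"
    by (simp add: card_image)
  have "\<not> L \<subseteq> (+) c ` S" if "\<forall>L\<in>lines. \<not> L \<subseteq> S" "L \<in> lines" for L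
  proof
    assume "L \<subseteq> (+) c ` S"
    then have "(+) (- c) ` L \<subseteq> S" by auto
    with that translate_line show False by blast
  qed
  with assms card_eq translate_line show ?thesis
    unfolding paving_ideal_def by auto
qed

lemma bmult_insert: "bmult (insert j g) f = (+) j ` f \<union> bmult g f"
  unfolding bmult_def by auto

lemma bmult_paving_ideal:
  assumes "finite g" "f \<in> paving_ideal"
  shows "bmult g f \<in> paving_ideal"
  using assms(1)
proof (induction g rule: finite_induct)
  case empty
  then show ?case by (simp add: bmult_def empty_in_paving_ideal)
next
  case (insert j g)
  then show ?case
    by (simp add: bmult_insert paving_ideal_Un translate_paving_ideal assms(2))
qed

text \<open>Circuit elimination: if \<open>(f \<union> g) - {u}\<close> is not itself a support it is a 4-set containing a
line, and that line contains the symmetric difference, since a point of it outside the line would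
put \<open>f\<close> or \<open>g\<close> inside the line plus \<open>u\<close>.\<close>

lemma paving_ideal_elimination:
  assumes f: "f \<in> paving_ideal" and g: "g \<in> paving_ideal" and u: "u \<in> f \<inter> g"
  shows "\<exists>h\<in>paving_ideal. (f - g) \<union> (g - f) \<subseteq> h \<and> h \<subseteq> (f \<union> g) - {u}"
proof (cases "f = g")
  case True
  then show ?thesis using empty_in_paving_ideal by blast
next
  case False
  define U where "U = (f \<union> g) - {u}"
  have sym_diff: "(f - g) \<union> (g - f) \<subseteq> U"
    using u unfolding U_def by auto
  show ?thesis
  proof (cases "U \<in> paving_ideal")
    case True
    with sym_diff show ?thesis unfolding U_def by blast
  next
    case U_notin: False
    have fin: "finite (f \<union> g)"
      using finite_paving_ideal[OF f] finite_paving_ideal[OF g] by simp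
    then have fin_U: "finite U" unfolding U_def by blast
    have "f \<noteq> {}" "g \<noteq> {}" "\<not> g \<subseteq> f \<or> \<not> f \<subseteq> g"
      using u False by blast+
    then have "5 \<le> card (f \<union> g)"
      using card_Un_paving_ideal_ge[OF f g] card_Un_paving_ideal_ge[OF g f] by (auto simp: Un_commute)
    then have "4 \<le> card U"
      using fin u unfolding U_def by simp
    with U_notin fin obtain L where L: "L \<in> lines" "L \<subseteq> U" and card_U: "card U = 4"
      unfolding paving_ideal_def U_def by auto
    have "x \<in> L" if x: "x \<in> (f - g) \<union> (g - f)" for x
    proof (rule ccontr)
      assume "x \<notin> L"
      have "x \<in> U" using x sym_diff by blast
      then have "card (U - {x}) = card L"
        using card_U card_line[OF L(1)] fin_U by simp
      then have L_eq: "L = U - {x}"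
        using card_subset_eq[of "U - {x}" L] L \<open>x \<notin> L\<close> fin_U by auto
      then have "u \<notin> L" unfolding U_def by blast
      have "f \<subseteq> insert u L \<or> g \<subseteq> insert u L"
        using x L_eq unfolding U_def by blast
      then show False
        using not_in_paving_ideal_line_insert[OF f L(1) \<open>u \<notin> L\<close>]
          not_in_paving_ideal_line_insert[OF g L(1) \<open>u \<notin> L\<close>] u by blast
    qed
    with L U_def show ?thesis
      using line_in_paving_ideal by blast
  qed
qed

theorem tropical_ideal_paving_ideal: "tropical_ideal paving_ideal"
  unfolding tropical_ideal_def b_ideal_def
proof (intro conjI ballI allI impI)
  fix f g :: "int set" assume "f \<in> paving_ideal" "finite g"
  then show "bmult g f \<in> paving_ideal" by (rule bmult_paving_ideal[rotated])
next
  fix f g u assume "f \<in> paving_ideal" "g \<in> paving_ideal" "u \<in> f \<inter> g"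
  then show "\<exists>h\<in>paving_ideal. f - g \<union> (g - f) \<subseteq> h \<and> h \<subseteq> f \<union> g - {u}"
    by (rule paving_ideal_elimination)
qed (simp_all add: finite_paving_ideal empty_in_paving_ideal paving_ideal_Un)

lemma dependent_card4:
  assumes "finite D" "card D = 4"
  shows "\<exists>f\<in>paving_ideal. f \<noteq> {} \<and> f \<subseteq> D"
proof (cases "D \<in> paving_ideal")
  case True
  moreover have "D \<noteq> {}" using assms by auto
  ultimately show ?thesis by blast
next
  case False
  with assms obtain L where L: "L \<in> lines" "L \<subseteq> D"
    unfolding paving_ideal_def by auto
  moreover have "L \<noteq> {}" using card_line[OF L(1)] by auto
  ultimately show ?thesis using line_in_paving_ideal by blast
qed

lemma matroid_indep_card_le:
  assumes "matroid_indep paving_ideal B"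
  shows "finite B \<and> card B \<le> 3"
proof (rule ccontr)
  assume "\<not> ?thesis"
  then obtain D where D: "D \<subseteq> B" "finite D" "card D = 4"
    by (rule obtain_card4_subset)
  obtain f where "f \<in> paving_ideal" "f \<noteq> {}" "f \<subseteq> D"
    using dependent_card4[OF D(2,3)] by blast
  with D(1) assms show False
    unfolding matroid_indep_def by blast
qed

lemma matroid_indep_card3:
  assumes "card S = 3" "S \<notin> lines"
  shows "matroid_indep paving_ideal S"
  unfolding matroid_indep_def
proof (intro ballI impI notI)
  fix f assume f: "f \<in> paving_ideal" "f \<noteq> {}" "f \<subseteq> S"
  have "finite S" using assms(1) by (simp add: card_ge_0_finite)
  then have "card f \<le> card S" using card_mono f(3) by blast
  with card_paving_ideal_ge[OF f(1,2)] assms(1) have "card f = card S" by simp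
  then have "f = S" using card_subset_eq[OF \<open>finite S\<close> f(3)] by simp
  with f(1) assms show False
    using card3_in_paving_ideal_iff by blast
qed

lemma exists_card3_not_line: "\<exists>S. card S = 3 \<and> S \<notin> lines"
proof (rule ccontr)
  assume "\<not> ?thesis"
  then have "{0, 1, 2} \<in> lines" "{0, 1, 3} \<in> lines" by simp_all
  from lines_eqI[OF this, of 0 1] have "{0, 1, 2 :: int} = {0, 1, 3}" by simp
  then have "(2 :: int) \<in> {0, 1, 3}" by blast
  then show False by simp
qed

theorem zero_dim_degree_paving_ideal: "zero_dim_degree paving_ideal 3"
proof -
  obtain S where "card S = 3" "S \<notin> lines"
    using exists_card3_not_line by blast
  then have "finite S" "matroid_indep paving_ideal S"
    using matroid_indep_card3 by (simp_all add: card_ge_0_finite)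
  moreover have "\<forall>B. matroid_indep paving_ideal B \<longrightarrow> finite B \<and> card B \<le> 3"
    using matroid_indep_card_le by blast
  ultimately show ?thesis
    unfolding zero_dim_degree_def
    using tropical_ideal_paving_ideal \<open>card S = 3\<close> by auto
qed

theorem paving_tropical_ideal_paving_ideal: "paving_tropical_ideal paving_ideal"
  unfolding paving_tropical_ideal_def
proof (intro exI conjI allI impI)
  show "zero_dim_degree paving_ideal 3" by (rule zero_dim_degree_paving_ideal)
next
  fix C assume "circuit paving_ideal C"
  then have C: "C \<in> paving_ideal" "C \<noteq> {}"
    and minimal: "\<And>f. f \<in> paving_ideal \<Longrightarrow> f \<noteq> {} \<Longrightarrow> f \<subseteq> C \<Longrightarrow> f = C"
    unfolding circuit_def by auto
  have "card C \<le> 4"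
  proof (rule ccontr)
    assume "\<not> card C \<le> 4"
    then have "\<not> (finite C \<and> card C \<le> 3)" by simp
    then obtain D where D: "D \<subseteq> C" "finite D" "card D = 4"
      by (rule obtain_card4_subset)
    then obtain f where "f \<in> paving_ideal" "f \<noteq> {}" "f \<subseteq> D"
      using dependent_card4 by blast
    with D minimal have "C \<subseteq> D" by blast
    with D \<open>\<not> card C \<le> 4\<close> show False
      using card_mono by fastforce
  qed
  with card_paving_ideal_ge[OF C] show "card C = 3 \<or> card C = 3 + 1" by linarith
qed

end

definition ruler :: "nat \<Rightarrow> int set" where
  "ruler n = (\<lambda>a. a * 4 ^ n) ` {0, 1, 3}"

definition ruler_lines :: "nat set \<Rightarrow> int set set" where
  "ruler_lines A = {(+) k ` ruler n | k n. n \<in> A}"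

lemma small_mult_pow4_le:
  fixes c c' :: int
  assumes "c * 4 ^ n = c' * 4 ^ m" "\<bar>c\<bar> \<le> 3" "c' \<noteq> 0"
  shows "m \<le> n"
proof (rule ccontr)
  assume "\<not> m \<le> n"
  then have "(4::int) ^ m = 4 ^ n * 4 ^ (m - n)"
    by (simp flip: power_add)
  with assms(1) have c: "c = c' * 4 ^ (m - n)" by simp
  have "(4::int) ^ 1 \<le> 4 ^ (m - n)"
    using \<open>\<not> m \<le> n\<close> by (intro power_increasing) auto
  moreover have "1 \<le> \<bar>c'\<bar>" using \<open>c' \<noteq> 0\<close> by linarith
  ultimately have "4 \<le> \<bar>c' * 4 ^ (m - n)\<bar>"
    using mult_mono[of 1 "\<bar>c'\<bar>" 4 "4 ^ (m - n)"] by (simp add: abs_mult)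
  with c assms(2) show False by simp
qed

lemma ruler_diff_unique:
  assumes "a \<in> ruler n" "b \<in> ruler n" "a' \<in> ruler m" "b' \<in> ruler m" "a \<noteq> b"
    and "a - b = a' - b'"
  shows "n = m \<and> a = a' \<and> b = b'"
proof -
  obtain \<alpha> \<beta> \<alpha>' \<beta>' :: int
    where digits: "\<alpha> \<in> {0, 1, 3}" "\<beta> \<in> {0, 1, 3}" "\<alpha>' \<in> {0, 1, 3}" "\<beta>' \<in> {0, 1, 3}"
      and eq: "a = \<alpha> * 4 ^ n" "b = \<beta> * 4 ^ n" "a' = \<alpha>' * 4 ^ m" "b' = \<beta>' * 4 ^ m"
    using assms(1-4) unfolding ruler_def by blast
  have "\<alpha> \<noteq> \<beta>" "\<alpha>' \<noteq> \<beta>'" using assms(5,6) eq by auto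
  have diff: "(\<alpha> - \<beta>) * 4 ^ n = (\<alpha>' - \<beta>') * 4 ^ m"
    using assms(6) eq by (simp add: algebra_simps)
  have "n = m"
    using small_mult_pow4_le[OF diff] small_mult_pow4_le[OF diff[symmetric]]
      digits \<open>\<alpha> \<noteq> \<beta>\<close> \<open>\<alpha>' \<noteq> \<beta>'\<close> by auto
  with diff have "\<alpha> - \<beta> = \<alpha>' - \<beta>'" by simp
  with digits \<open>\<alpha> \<noteq> \<beta>\<close> have "\<alpha> = \<alpha>' \<and> \<beta> = \<beta>'" by auto
  with eq \<open>n = m\<close> show ?thesis by simp
qed

lemma card_ruler: "card (ruler n) = 3"
  unfolding ruler_def by simp

lemma line_family_ruler_lines: "line_family (ruler_lines A)"
proof
  fix L assume "L \<in> ruler_lines A"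
  then show "card L = 3"
    unfolding ruler_lines_def by (auto simp: card_image card_ruler)
next
  fix L c assume "L \<in> ruler_lines A"
  then obtain k n where "n \<in> A" "L = (+) k ` ruler n"
    unfolding ruler_lines_def by blast
  then have "(+) c ` L = (+) (c + k) ` ruler n"
    by (simp add: image_image add.assoc)
  with \<open>n \<in> A\<close> show "(+) c ` L \<in> ruler_lines A"
    unfolding ruler_lines_def by blast
next
  fix L M x y assume "L \<in> ruler_lines A" "M \<in> ruler_lines A"
    and xy: "x \<in> L \<inter> M" "y \<in> L \<inter> M" "x \<noteq> y"
  then obtain k n j m where L: "L = (+) k ` ruler n" and M: "M = (+) j ` ruler m"
    unfolding ruler_lines_def by blast
  obtain a b a' b' where "a \<in> ruler n" "b \<in> ruler n" "x = k + a" "y = k + b"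
    and "a' \<in> ruler m" "b' \<in> ruler m" "x = j + a'" "y = j + b'"
    using xy L M by blast
  with \<open>x \<noteq> y\<close> have "n = m \<and> a = a' \<and> b = b'"
    using ruler_diff_unique[of a n b a' m b'] by auto
  with L M \<open>x = k + a\<close> \<open>x = j + a'\<close> show "L = M" by auto
qed

lemma ruler_in_ruler_lines_iff: "ruler n \<in> ruler_lines A \<longleftrightarrow> n \<in> A"
proof
  assume "n \<in> A"
  moreover have "ruler n = (+) 0 ` ruler n" by simp
  ultimately show "ruler n \<in> ruler_lines A"
    unfolding ruler_lines_def by blast
next
  assume "ruler n \<in> ruler_lines A"
  then obtain k m where "m \<in> A" and eq: "ruler n = (+) k ` ruler m"
    unfolding ruler_lines_def by blast
  have "0 \<in> ruler n" "4 ^ n \<in> ruler n" unfolding ruler_def by auto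
  then obtain a' b' where "a' \<in> ruler m" "b' \<in> ruler m" "0 = k + a'" "4 ^ n = k + b'"
    using eq by blast
  moreover have "(0::int) \<noteq> 4 ^ n" by simp
  ultimately have "n = m"
    using ruler_diff_unique[of 0 n "4 ^ n" a' m b'] \<open>0 \<in> ruler n\<close> \<open>4 ^ n \<in> ruler n\<close>
    by (simp add: algebra_simps)
  with \<open>m \<in> A\<close> show "n \<in> A" by simp
qed

interpretation ruler: line_family "ruler_lines A" for A
  by (rule line_family_ruler_lines)

lemma inj_ruler_paving_ideal: "inj ruler.paving_ideal"
proof (rule injI)
  fix A B assume "ruler.paving_ideal A = ruler.paving_ideal B"
  then show "A = B"
    using ruler.card3_in_paving_ideal_iff[OF card_ruler] ruler_in_ruler_lines_iff by blast
qed

theorem mainTheorem8: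
  shows "\<not> countable {I. paving_tropical_ideal I \<and> zero_dim_degree I 3} \<and>
         \<not> countable {I. zero_dim_degree I 3}"
proof -
  have "uncountable (UNIV :: nat set set)"
    using Cantors_theorem[of "UNIV :: nat set"] by (auto simp: uncountable_def)
  then have "uncountable (range ruler.paving_ideal)"
    using countable_image_inj_on[OF _ inj_ruler_paving_ideal] by blast
  moreover have "range ruler.paving_ideal \<subseteq> {I. paving_tropical_ideal I \<and> zero_dim_degree I 3}"
    using ruler.paving_tropical_ideal_paving_ideal ruler.zero_dim_degree_paving_ideal by blast
  ultimately have "uncountable {I. paving_tropical_ideal I \<and> zero_dim_degree I 3}"
    using countable_subset by blast
  moreover have "{I. paving_tropical_ideal I \<and> zero_dim_degree I 3} \<subseteq> {I. zero_dim_degree I 3}"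
    by blast
  ultimately show ?thesis
    using countable_subset by blast
qed

end
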